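(* Let $\mathcal S$ be a collection of nonempty subsets of a set $X$ with a basis $\mathcal B\subseteq\mathcal S$. Then for every $A\in\mathcal B$, $[A]_{\mathcal S}\subseteq\mathcal B$.
   Context: Fix a nonempty set $X$; $A^c:=X\setminus A$. $A\perp B$ means $A\cap B=\emptyset$ and $A\ne B^c$. $A$ dominates $B$ if $A\supseteq B$ or $A\supseteq B^c$. A collection is orthogonal if any two distinct members are orthogonal. A basis for $\mathcal S$ is an orthogonal $\mathcal B\subseteq\mathcal S$ such that every member of $\mathcal S$ is dominated by some member of $\mathcal B$. For $A,B\in\mathcal S$, $B$ is $\mathcal S$-maximally orthogonal to $A$ if $B\perp A$ and no $C\in\mathcal S$ satisfies $C\perp A$, $C\supsetneq B$; $[A]_{\mathcal S}:=\{A\}\cup\{B\in\mathcal S:B$ is $\mathcal S$-maximally orthogonal to $A\}$. *)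

theory Defs
  imports Main
begin

definition orth :: "'a set \<Rightarrow> 'a set \<Rightarrow> 'a set \<Rightarrow> bool" where
  "orth X A B \<longleftrightarrow> A \<inter> B = {} \<and> A \<noteq> X - B"

definition dominates :: "'a set \<Rightarrow> 'a set \<Rightarrow> 'a set \<Rightarrow> bool" where
  "dominates X A B \<longleftrightarrow> B \<subseteq> A \<or> X - B \<subseteq> A"

definition orthogonal_coll :: "'a set \<Rightarrow> 'a set set \<Rightarrow> bool" where
  "orthogonal_coll X \<C> \<longleftrightarrow> (\<forall>A\<in>\<C>. \<forall>B\<in>\<C>. A \<noteq> B \<longrightarrow> orth X A B)"

definition is_basis :: "'a set \<Rightarrow> 'a set set \<Rightarrow> 'a set set \<Rightarrow> bool" where
  "is_basis X \<S> \<B> \<longleftrightarrow> \<B> \<subseteq> \<S> \<and> orthogonal_coll X \<B> \<and>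
     (\<forall>S\<in>\<S>. \<exists>B\<in>\<B>. dominates X B S)"

definition max_orth :: "'a set \<Rightarrow> 'a set set \<Rightarrow> 'a set \<Rightarrow> 'a set \<Rightarrow> bool" where
  "max_orth X \<S> A B \<longleftrightarrow> orth X B A \<and> \<not> (\<exists>C\<in>\<S>. orth X C A \<and> B \<subset> C)"

definition orth_class :: "'a set \<Rightarrow> 'a set set \<Rightarrow> 'a set \<Rightarrow> 'a set set" where
  "orth_class X \<S> A = {A} \<union> {B \<in> \<S>. max_orth X \<S> A B}"

end

theory Submission
  imports Defs
begin

text \<open>Let B be maximally orthogonal to A \<in> \<B>, and let D \<in> \<B> dominate B. If D contained the
  complement of B, it would contain A (which is disjoint from B), so D = A by orthogonality
  of \<B>, forcing A = X - B, which orthogonality of B and A excludes. Hence B \<subseteq> D; then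
  D \<noteq> A, so D is orthogonal to A, and maximality of B gives B = D \<in> \<B>.\<close>

lemma orthogonal_collD:
  assumes "orthogonal_coll X \<C>" "C \<in> \<C>" "D \<in> \<C>" "C \<noteq> D"
  shows "orth X C D"
  using assms unfolding orthogonal_coll_def by blast

lemma orth_dominator_contains:
  assumes orth_BA: "orth X B A"
    and A: "A \<noteq> {}" "A \<subseteq> X" and B: "B \<subseteq> X"
    and coll: "orthogonal_coll X \<B>" "A \<in> \<B>" "D \<in> \<B>"
    and dom: "dominates X D B"
  shows "B \<subseteq> D"
proof (rule ccontr)
  assume "\<not> B \<subseteq> D"
  with dom have compl: "X - B \<subseteq> D" unfolding dominates_def by blast
  have A_compl: "A \<subseteq> X - B" using orth_BA A unfolding orth_def by blast
  show False
  proof (cases "D = A")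
    case True
    with compl A_compl B have "B = X - A" by blast
    with orth_BA show False unfolding orth_def by blast
  next
    case False
    with coll have "D \<inter> A = {}" using orthogonal_collD unfolding orth_def by blast
    with compl A_compl A(1) show False by blast
  qed
qed

lemma max_orth_mem_basis:
  assumes sets: "\<forall>S\<in>\<S>. S \<noteq> {} \<and> S \<subseteq> X"
    and basis: "is_basis X \<S> \<B>" and A: "A \<in> \<B>"
    and B: "B \<in> \<S>" "max_orth X \<S> A B"
  shows "B \<in> \<B>"
proof -
  have sub: "\<B> \<subseteq> \<S>" and coll: "orthogonal_coll X \<B>"
    using basis unfolding is_basis_def by auto
  obtain D where D: "D \<in> \<B>" "dominates X D B"
    using basis B(1) unfolding is_basis_def by blast
  have orth_BA: "orth X B A" and maximal: "\<not> (\<exists>C\<in>\<S>. orth X C A \<and> B \<subset> C)"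
    using B(2) unfolding max_orth_def by auto
  have A_ne: "A \<noteq> {}" and A_sub: "A \<subseteq> X" using sets sub A by auto
  have B_ne: "B \<noteq> {}" and B_sub: "B \<subseteq> X" using sets B(1) by auto
  have "B \<subseteq> D"
    using orth_dominator_contains[OF orth_BA A_ne A_sub B_sub coll A D] .
  moreover have "D \<noteq> A"
    using \<open>B \<subseteq> D\<close> B_ne orth_BA unfolding orth_def by blast
  hence "orth X D A" using orthogonal_collD[OF coll D(1) A] by blast
  ultimately have "B = D" using maximal D(1) sub by blast
  with D(1) show ?thesis by simp
qed

theorem mainTheorem12:
  fixes X :: "'a set" and \<S> \<B> :: "'a set set"
  assumes "X \<noteq> {}"
    and "\<forall>S\<in>\<S>. S \<noteq> {} \<and> S \<subseteq> X"
    and "is_basis X \<S> \<B>"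
    and "A \<in> \<B>"
  shows "orth_class X \<S> A \<subseteq> \<B>"
  using assms(4) max_orth_mem_basis[OF assms(2-4)] unfolding orth_class_def by blast

end
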